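(* Let $R$ be a ring with unity and involution $*$, let $a\in R$ and let $m$ be a nonnegative integer. Then $a$ is left dual core invertible if and only if $a$ is left dual $a^m$-core invertible.
   Context: Here $a^0=1$. An element $a$ is left dual core invertible if there exists $x\in R$ with $axa=a$, $(xa)^*=xa$ and $x^2a=x$. For $v\in R$, $a$ is left dual $v$-core invertible if there exists $x\in R$ with $axva=a$, $(xva)^*=xva$ and $x^2va=x$. *)

theory Defs
  imports Main
begin

class ring_1_inv = ring_1 +
  fixes inv_star :: "'a \<Rightarrow> 'a"
  assumes inv_star_inv: "inv_star (inv_star x) = x"
    and inv_star_add: "inv_star (x + y) = inv_star x + inv_star y"
    and inv_star_mult: "inv_star (x * y) = inv_star y * inv_star x"

definition left_dual_core_invertible :: "'a::ring_1_inv \<Rightarrow> bool" where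
  "left_dual_core_invertible a \<longleftrightarrow>
     (\<exists>x. a * x * a = a \<and> inv_star (x * a) = x * a \<and> x ^ 2 * a = x)"

definition left_dual_v_core_invertible :: "'a::ring_1_inv \<Rightarrow> 'a \<Rightarrow> bool" where
  "left_dual_v_core_invertible v a \<longleftrightarrow>
     (\<exists>x. a * x * v * a = a \<and> inv_star (x * v * a) = x * v * a \<and> x ^ 2 * v * a = x)"

end

theory Submission
  imports Defs
begin

text \<open>If \<open>x\<close> is a left dual core inverse of \<open>a\<close>, then \<open>x\<^sup>2 a = x\<close> makes \<open>x\<^sup>k a\<^sup>k\<close>
  collapse to \<open>x a\<close> for \<open>k \<ge> 1\<close>, so \<open>x ^ (m + 1)\<close> is a left dual \<open>a\<^sup>m\<close>-core inverse of \<open>a\<close>.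
  Conversely, a left dual \<open>v\<close>-core inverse \<open>y\<close> yields the left dual core inverse \<open>y v\<close> as
  soon as \<open>v y v a = v\<close>; for \<open>v = a\<^sup>m\<close> this holds trivially if \<open>m = 0\<close>, and otherwise
  \<open>v = w a\<close> turns \<open>a y v a = a\<close> into it.\<close>

lemma power_Suc_mult_power_Suc_eq:
  fixes x a :: "'a::monoid_mult"
  assumes "x * x * a = x"
  shows "x ^ Suc k * a ^ Suc k = x * a"
proof (induction k)
  case 0
  show ?case by simp
next
  case (Suc k)
  have "x ^ Suc (Suc k) * a ^ Suc (Suc k) = x ^ k * (x * x * a) * a ^ Suc k"
    by (simp only: power_Suc2[of x "Suc k"] power_Suc2[of x k] power_Suc[of a "Suc k"] mult.assoc)
  also have "\<dots> = x ^ Suc k * a ^ Suc k"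
    using assms by (simp add: power_Suc2 mult.assoc power_commutes)
  finally show ?case using Suc by simp
qed

lemma left_dual_v_core_invertible_power:
  fixes a :: "'a::ring_1_inv"
  assumes "left_dual_core_invertible a"
  shows "left_dual_v_core_invertible (a ^ m) a"
proof -
  obtain x where inner: "a * x * a = a" and herm: "inv_star (x * a) = x * a"
    and idem: "x * x * a = x"
    using assms by (auto simp: left_dual_core_invertible_def power2_eq_square)
  have collapse: "x ^ Suc m * a ^ m * a = x * a"
    using power_Suc_mult_power_Suc_eq[OF idem, of m] by (simp add: power_Suc2 mult.assoc power_commutes)
  have "(x ^ Suc m) ^ 2 * a ^ m * a = x ^ Suc m * (x ^ Suc m * a ^ m * a)"
    by (simp add: power2_eq_square mult.assoc)
  also have "\<dots> = x ^ m * (x * x * a)"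
    unfolding collapse by (simp only: power_Suc2 mult.assoc)
  also have "\<dots> = x ^ Suc m"
    using idem by (simp only: power_Suc2 mult.assoc)
  finally have "(x ^ Suc m) ^ 2 * a ^ m * a = x ^ Suc m" .
  moreover have "a * x ^ Suc m * a ^ m * a = a"
    using collapse inner by (simp add: mult.assoc)
  ultimately show ?thesis
    unfolding left_dual_v_core_invertible_def using collapse herm by metis
qed

lemma left_dual_v_core_invertible_one_iff:
  fixes a :: "'a::ring_1_inv"
  shows "left_dual_v_core_invertible 1 a \<longleftrightarrow> left_dual_core_invertible a"
  by (simp add: left_dual_v_core_invertible_def left_dual_core_invertible_def)

lemma left_dual_core_invertible_if_v_core_invertible_mult_right:
  fixes a :: "'a::ring_1_inv"
  assumes "left_dual_v_core_invertible (w * a) a"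
  shows "left_dual_core_invertible a"
proof -
  let ?v = "w * a"
  obtain y where inner: "a * y * ?v * a = a" and herm: "inv_star (y * ?v * a) = y * ?v * a"
    using assms unfolding left_dual_v_core_invertible_def by blast
  have "?v * (y * ?v * a) = ?v"
    using inner by (simp add: mult.assoc)
  then have "(y * ?v) ^ 2 * a = y * ?v"
    by (simp add: power2_eq_square mult.assoc)
  with inner herm show ?thesis
    unfolding left_dual_core_invertible_def by (metis mult.assoc)
qed

theorem corollary3p5:
  fixes a :: "'a::ring_1_inv" and m :: nat
  shows "left_dual_core_invertible a \<longleftrightarrow> left_dual_v_core_invertible (a ^ m) a"
proof
  show "left_dual_core_invertible a \<Longrightarrow> left_dual_v_core_invertible (a ^ m) a"
    by (rule left_dual_v_core_invertible_power)
next
  assume power_inv: "left_dual_v_core_invertible (a ^ m) a"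
  show "left_dual_core_invertible a"
  proof (cases m)
    case 0
    with power_inv show ?thesis
      by (simp add: left_dual_v_core_invertible_one_iff)
  next
    case (Suc k)
    with power_inv have "left_dual_v_core_invertible (a ^ k * a) a"
      by (simp only: power_Suc2)
    then show ?thesis
      by (rule left_dual_core_invertible_if_v_core_invertible_mult_right)
  qed
qed

end
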